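(* Let $G$ act properly on a countable set $S$. Then for every invariant $m:S\times S\to[0,\infty]$, $$\sum_{b,b'\in O}\sum_{s\in Gb'}m(b,s)\,\lambda(G_{s,s})=\sum_{b,b'\in O}\sum_{s\in Gb'}\lambda(G_{b',b'})\,m(s,b),$$ and if $G$ is unimodular, moreover $$\sum_{b\in O}\frac{1}{\lambda(G_{b,b})}\sum_{s\in S}m(b,s)=\sum_{b\in O}\frac{1}{\lambda(G_{b,b})}\sum_{s\in S}m(s,b).$$
   Context: $G$ is a locally compact second countable Hausdorff group with left Haar measure $\lambda$. $S$ is countable (with its power set), $G$ acts measurably on $S$, and the action is proper: with $\mu_s$ the image of $\lambda$ under $g\mapsto gs$, there is a partition $B_1,B_2,\dots$ of $S$ with $\mu_s(B_n)<\infty$ for all $s,n$. $G_{s,t}=\{g:gs=t\}$. $O$ is a system of representatives of the orbits $Gs$. $m$ is invariant if $m(gs,gt)=m(s,t)$ for all $g,s,t$. $G$ is unimodular if its left Haar measure is also right invariant. *)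

theory Defs
  imports "HOL-Analysis.Analysis" "HOL-Probability.Probability"
begin

text \<open>The group G is a type 'g of class topological_group_add (written additively;
  group_add does NOT require commutativity). Locally compact, second countable, Hausdorff.\<close>

definition lcsc_group :: "'g::{topological_group_add, t2_space, second_countable_topology} itself \<Rightarrow> bool" where
  "lcsc_group _ \<longleftrightarrow> locally_compact_space (euclidean :: 'g topology)"

definition left_haar_measure :: "'g::{topological_group_add, t2_space, second_countable_topology} measure \<Rightarrow> bool" where
  "left_haar_measure L \<longleftrightarrow>
     sets L = sets borel \<and>
     (\<forall>g A. A \<in> sets borel \<longrightarrow> emeasure L ((\<lambda>x. g + x) ` A) = emeasure L A) \<and>
     (\<forall>K. compact K \<longrightarrow> emeasure L K < \<infinity>) \<and>
     (\<forall>U. open U \<and> U \<noteq> {} \<longrightarrow> emeasure L U > 0)"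

definition unimodular :: "'g::{topological_group_add, t2_space, second_countable_topology} measure \<Rightarrow> bool" where
  "unimodular L \<longleftrightarrow> (\<forall>g A. A \<in> sets borel \<longrightarrow> emeasure L ((\<lambda>x. x + g) ` A) = emeasure L A)"

definition measurable_action :: "('g::{topological_group_add, t2_space, second_countable_topology} \<Rightarrow> 's::countable \<Rightarrow> 's) \<Rightarrow> bool" where
  "measurable_action act \<longleftrightarrow>
     (\<forall>s. act 0 s = s) \<and> (\<forall>g h s. act (g + h) s = act g (act h s)) \<and>
     (\<lambda>(g, s). act g s) \<in> measurable (borel \<Otimes>\<^sub>M count_space UNIV) (count_space UNIV)"

definition orbit_measure :: "'g measure \<Rightarrow> ('g \<Rightarrow> 's \<Rightarrow> 's) \<Rightarrow> 's \<Rightarrow> 's measure" where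
  "orbit_measure L act s = distr L (count_space UNIV) (\<lambda>g. act g s)"

definition proper_action :: "'g measure \<Rightarrow> ('g \<Rightarrow> 's \<Rightarrow> 's) \<Rightarrow> bool" where
  "proper_action L act \<longleftrightarrow>
     (\<exists>B :: nat \<Rightarrow> 's set. disjoint_family B \<and> (\<Union>n. B n) = UNIV \<and>
        (\<forall>s n. emeasure (orbit_measure L act s) (B n) < \<infinity>))"

definition transporter :: "('g \<Rightarrow> 's \<Rightarrow> 's) \<Rightarrow> 's \<Rightarrow> 's \<Rightarrow> 'g set" where
  "transporter act s t = {g. act g s = t}"

definition orbit :: "('g \<Rightarrow> 's \<Rightarrow> 's) \<Rightarrow> 's \<Rightarrow> 's set" where
  "orbit act s = range (\<lambda>g. act g s)"

definition orbit_representatives :: "('g \<Rightarrow> 's \<Rightarrow> 's) \<Rightarrow> 's set \<Rightarrow> bool" where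
  "orbit_representatives act R \<longleftrightarrow> (\<forall>s. \<exists>!b. b \<in> R \<and> b \<in> orbit act s)"

definition invariant_kernel :: "('g \<Rightarrow> 's \<Rightarrow> 's) \<Rightarrow> ('s \<Rightarrow> 's \<Rightarrow> ennreal) \<Rightarrow> bool" where
  "invariant_kernel act m \<longleftrightarrow> (\<forall>g s t. m (act g s) (act g t) = m s t)"

end

theory Submission
  imports Defs
begin

text \<open>
  For fixed \<open>b, b'\<close> integrate \<open>g \<mapsto> m(g b, b') = m(b, g\<inverse> b')\<close> over \<open>G\<close>.
  Grouping \<open>g\<close> by the value of \<open>g b\<close>, resp. of \<open>g\<inverse> b'\<close>, turns the two integrals into
  \<open>\<Sigma>\<^sub>u \<lambda>(G(b,u)) m(u,b')\<close> and \<open>\<Sigma>\<^sub>s m(b,s) \<lambda>(G(s,b'))\<close> (mass transport).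
  For \<open>t\<close> in the orbit of \<open>s\<close> the transporter \<open>G(s,t)\<close> is a left coset of the stabiliser
  \<open>G(s,s)\<close> and a right coset of \<open>G(t,t)\<close>, so \<open>\<lambda>(G(s,t)) = \<lambda>(G(s,s))\<close> by left invariance, and
  \<open>\<lambda>(G(s,t)) = \<lambda>(G(t,t))\<close> if \<open>G\<close> is unimodular. Summing over pairs of orbit representatives
  gives the first identity. In the unimodular case properness puts every \<open>\<lambda>(G(b,b))\<close> into
  \<open>(0, \<infinity>)\<close>, so one may divide by \<open>\<lambda>(G(b,b)) \<lambda>(G(b',b'))\<close> before summing, which gives the second.
\<close>

text \<open>
  The library's lemmas for swapping and scaling \<open>infsum\<close> need a uniform space resp. continuous
  multiplication, which \<open>ennreal\<close> lacks; on countable sets they follow from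
  \<open>nn_integral\<close> over the counting measure instead.
\<close>

lemma infsum_ennreal_eq_nn_integral:
  fixes f :: "'a \<Rightarrow> ennreal"
  assumes A: "countable A"
  shows "(\<Sum>\<^sub>\<infinity>x\<in>A. f x) = (\<integral>\<^sup>+x. f x \<partial>count_space A)"
proof (rule antisym)
  have infsum_SUP: "(\<Sum>\<^sub>\<infinity>x\<in>A. f x) = (SUP F\<in>{F. finite F \<and> F \<subseteq> A}. sum f F)"
    by (rule nonneg_infsum_complete) auto
  show "(\<Sum>\<^sub>\<infinity>x\<in>A. f x) \<le> (\<integral>\<^sup>+x. f x \<partial>count_space A)"
    unfolding infsum_SUP
  proof (rule SUP_least)
    fix F assume F: "F \<in> {F. finite F \<and> F \<subseteq> A}"
    then have "sum f F = (\<integral>\<^sup>+x. f x * indicator F x \<partial>count_space A)"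
      by (subst nn_integral_count_space'[of F]) (auto intro!: sum.cong)
    also have "\<dots> \<le> (\<integral>\<^sup>+x. f x \<partial>count_space A)"
      by (intro nn_integral_mono) (auto simp: indicator_def)
    finally show "sum f F \<le> (\<integral>\<^sup>+x. f x \<partial>count_space A)" .
  qed
  show "(\<integral>\<^sup>+x. f x \<partial>count_space A) \<le> (\<Sum>\<^sub>\<infinity>x\<in>A. f x)"
  proof (cases "finite A")
    case True
    then show ?thesis by (simp add: nn_integral_count_space_finite)
  next
    case False
    define e where "e = from_nat_into A"
    have e: "bij_betw e UNIV A"
      unfolding e_def using A False by (rule bij_betw_from_nat_into)
    have "(\<integral>\<^sup>+x. f x \<partial>count_space A) = (\<Sum>n. f (e n))"
      by (simp add: nn_integral_bij_count_space[symmetric, OF e] nn_integral_count_space_nat)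
    also have "\<dots> = (SUP n. sum f (e ` {..<n}))"
      using e by (simp add: suminf_eq_SUP sum.reindex bij_betw_def inj_on_subset[of e UNIV])
    also have "\<dots> \<le> (\<Sum>\<^sub>\<infinity>x\<in>A. f x)"
      unfolding infsum_SUP using e by (intro SUP_mono) (auto simp: bij_betw_def)
    finally show ?thesis .
  qed
qed

lemma infsum_swap_ennreal:
  fixes f :: "'a \<Rightarrow> 'b \<Rightarrow> ennreal"
  assumes "countable A" "countable B"
  shows "(\<Sum>\<^sub>\<infinity>x\<in>A. \<Sum>\<^sub>\<infinity>y\<in>B. f x y) = (\<Sum>\<^sub>\<infinity>y\<in>B. \<Sum>\<^sub>\<infinity>x\<in>A. f x y)"
  using assms unfolding infsum_ennreal_eq_nn_integral[OF assms(1)] infsum_ennreal_eq_nn_integral[OF assms(2)]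
  by (intro nn_integral_count_space_nn_integral) auto

lemma infsum_cmult_right_ennreal:
  fixes f :: "'a \<Rightarrow> ennreal"
  assumes "countable A"
  shows "(\<Sum>\<^sub>\<infinity>x\<in>A. c * f x) = c * (\<Sum>\<^sub>\<infinity>x\<in>A. f x)"
  using assms by (simp add: infsum_ennreal_eq_nn_integral nn_integral_cmult)

lemma divide_mult_eq_divide_mult_ennreal:
  fixes a b x y :: ennreal
  assumes "0 < a" "a < \<infinity>" "0 < b" "b < \<infinity>" and "b * x = a * y"
  shows "(1 / a) * x = (1 / b) * y"
proof -
  have inv_a: "(1 / a) * a = 1" and inv_b: "(1 / b) * b = 1"
    using assms(1-4) by (simp_all add: ennreal_divide_times)
  have "(1 / a) * x = (1 / a) * (((1 / b) * b) * x)"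
    by (simp only: inv_b mult_1_left)
  also have "\<dots> = (1 / b) * ((1 / a) * (b * x))"
    by (simp only: mult_ac)
  also have "\<dots> = (1 / b) * (((1 / a) * a) * y)"
    by (simp only: assms(5) mult.assoc)
  also have "\<dots> = (1 / b) * y"
    by (simp only: inv_a mult_1_left)
  finally show ?thesis .
qed

lemma nn_integral_eq_infsum_fibres:
  fixes \<phi> :: "'a \<Rightarrow> 's::countable" and F :: "'s \<Rightarrow> ennreal"
  assumes \<phi>: "\<phi> \<in> measurable M (count_space UNIV)"
  shows "(\<integral>\<^sup>+x. F (\<phi> x) \<partial>M) = (\<Sum>\<^sub>\<infinity>s. F s * emeasure M (\<phi> -` {s} \<inter> space M))"
proof -
  have fibre: "\<phi> -` {s} \<inter> space M \<in> sets M" for s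
    using \<phi> by (auto simp: measurable_def)
  have "(\<integral>\<^sup>+x. F (\<phi> x) \<partial>M)
      = (\<integral>\<^sup>+x. (\<integral>\<^sup>+s. F s * indicator (\<phi> -` {s} \<inter> space M) x \<partial>count_space UNIV) \<partial>M)"
    by (intro nn_integral_cong, subst nn_integral_count_space'[of "{\<phi> _}"])
       (auto simp: indicator_def)
  also have "\<dots> = (\<integral>\<^sup>+s. (\<integral>\<^sup>+x. F s * indicator (\<phi> -` {s} \<inter> space M) x \<partial>M) \<partial>count_space UNIV)"
    using fibre by (intro nn_integral_count_space_nn_integral) auto
  also have "\<dots> = (\<integral>\<^sup>+s. F s * emeasure M (\<phi> -` {s} \<inter> space M) \<partial>count_space UNIV)"
    using fibre by (simp add: nn_integral_cmult_indicator)
  finally show ?thesis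
    by (simp add: infsum_ennreal_eq_nn_integral)
qed

locale haar_action =
  fixes L :: "'g::{topological_group_add, t2_space, second_countable_topology} measure"
    and act :: "'g \<Rightarrow> 's::countable \<Rightarrow> 's"
  assumes left_haar: "left_haar_measure L"
    and action: "measurable_action act"
begin

lemma sets_L: "sets L = sets borel"
  using left_haar by (simp add: left_haar_measure_def)

lemma space_L [simp]: "space L = UNIV"
  using sets_eq_imp_space_eq[OF sets_L] by simp

lemma act_zero [simp]: "act 0 s = s"
  using action by (simp add: measurable_action_def)

lemma act_add: "act (g + h) s = act g (act h s)"
  using action by (simp add: measurable_action_def)

lemma act_neg_act [simp]: "act (- g) (act g s) = s"
  by (metis act_zero act_add left_minus)

lemma act_act_neg [simp]: "act g (act (- g) s) = s"
  by (metis act_zero act_add right_minus)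

lemma measurable_act: "(\<lambda>g. act g s) \<in> measurable L (count_space UNIV)"
proof -
  have "(\<lambda>(g, s). act g s) \<in> measurable (borel \<Otimes>\<^sub>M count_space UNIV) (count_space UNIV)"
    using action by (simp add: measurable_action_def)
  from measurable_comp[OF measurable_Pair2'[of s "count_space UNIV" borel] this]
  show ?thesis
    by (simp add: o_def measurable_cong_sets[OF sets_L refl])
qed

lemma measurable_act_neg: "(\<lambda>g. act (- g) s) \<in> measurable L (count_space UNIV)"
proof -
  have "uminus \<in> measurable L L"
    by (simp add: measurable_cong_sets[OF sets_L sets_L] borel_measurable_continuous_onI
        continuous_on_minus continuous_on_id)
  from measurable_comp[OF this measurable_act] show ?thesis
    by (simp add: o_def)
qed

lemma sets_transporter: "transporter act s t \<in> sets L"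
proof -
  have "(\<lambda>g. act g s) -` {t} \<inter> space L \<in> sets L"
    using measurable_act by (rule measurable_sets) simp
  then show ?thesis
    by (simp add: transporter_def vimage_def)
qed

lemma orbit_sym: "t \<in> orbit act s \<longleftrightarrow> s \<in> orbit act t"
  unfolding orbit_def image_iff by (metis UNIV_I act_neg_act)

lemma transporter_eq_empty: "t \<notin> orbit act s \<Longrightarrow> transporter act s t = {}"
  by (auto simp: transporter_def orbit_def)

lemma emeasure_transporter_left_coset:
  assumes "t \<in> orbit act s"
  shows "emeasure L (transporter act s t) = emeasure L (transporter act s s)"
proof -
  obtain k where k: "t = act k s"
    using assms by (auto simp: orbit_def)
  have "transporter act s t = (\<lambda>x. k + x) ` transporter act s s"
  proof (intro set_eqI iffI)
    fix g assume "g \<in> transporter act s t"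
    then have "act (- k + g) s = s"
      using k by (simp add: transporter_def act_add)
    then show "g \<in> (\<lambda>x. k + x) ` transporter act s s"
      by (intro image_eqI[of _ _ "- k + g"]) (auto simp: transporter_def add.assoc[symmetric])
  qed (use k in \<open>auto simp: transporter_def act_add\<close>)
  moreover have "transporter act s s \<in> sets borel"
    using sets_transporter sets_L by simp
  ultimately show ?thesis
    using left_haar unfolding left_haar_measure_def by metis
qed

lemma emeasure_transporter_right_coset:
  assumes "unimodular L" and "s \<in> orbit act t"
  shows "emeasure L (transporter act s t) = emeasure L (transporter act t t)"
proof -
  obtain k where k: "s = act k t"
    using assms(2) by (auto simp: orbit_def)
  have "transporter act s t = (\<lambda>x. x + - k) ` transporter act t t"
  proof (intro set_eqI iffI)
    fix g assume "g \<in> transporter act s t"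
    then have "act (g + k) t = t"
      using k by (simp add: transporter_def act_add)
    then show "g \<in> (\<lambda>x. x + - k) ` transporter act t t"
      by (intro image_eqI[of _ _ "g + k"]) (auto simp: transporter_def add.assoc)
  qed (use k in \<open>auto simp: transporter_def act_add[symmetric] add.assoc\<close>)
  moreover have "transporter act t t \<in> sets borel"
    using sets_transporter sets_L by simp
  ultimately show ?thesis
    using assms(1) unfolding unimodular_def by metis
qed

lemma mass_transport:
  assumes "invariant_kernel act m"
  shows "(\<Sum>\<^sub>\<infinity>s. m b s * emeasure L (transporter act s b'))
       = (\<Sum>\<^sub>\<infinity>u. emeasure L (transporter act b u) * m u b')"
proof -
  have "(\<Sum>\<^sub>\<infinity>u. emeasure L (transporter act b u) * m u b') = (\<integral>\<^sup>+g. m (act g b) b' \<partial>L)"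
    using nn_integral_eq_infsum_fibres[OF measurable_act, of "\<lambda>u. m u b'"]
    by (simp add: transporter_def vimage_def mult.commute)
  also have "\<dots> = (\<integral>\<^sup>+g. m b (act (- g) b') \<partial>L)"
  proof (rule nn_integral_cong)
    fix g
    show "m (act g b) b' = m b (act (- g) b')"
      using assms unfolding invariant_kernel_def by (metis act_neg_act)
  qed
  also have "\<dots> = (\<Sum>\<^sub>\<infinity>s. m b s * emeasure L (transporter act s b'))"
  proof -
    have "(\<lambda>g. act (- g) b') -` {s} = transporter act s b'" for s
      by (auto simp: transporter_def)
    then show ?thesis
      using nn_integral_eq_infsum_fibres[OF measurable_act_neg, of "m b"] by simp
  qed
  finally show ?thesis ..
qed

lemma infsum_transporter_target:
  "(\<Sum>\<^sub>\<infinity>u. emeasure L (transporter act b u) * f u)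
     = (\<Sum>\<^sub>\<infinity>u\<in>orbit act b. emeasure L (transporter act b b) * f u)"
  by (rule infsum_cong_neutral) (auto simp: transporter_eq_empty emeasure_transporter_left_coset)

lemma infsum_transporter_source:
  "(\<Sum>\<^sub>\<infinity>s. f s * emeasure L (transporter act s t))
     = (\<Sum>\<^sub>\<infinity>s\<in>orbit act t. f s * emeasure L (transporter act s s))"
proof (rule infsum_cong_neutral)
  fix s
  show "s \<in> UNIV \<inter> orbit act t \<Longrightarrow>
      f s * emeasure L (transporter act s t) = f s * emeasure L (transporter act s s)"
    using orbit_sym emeasure_transporter_left_coset by simp
  show "s \<in> UNIV - orbit act t \<Longrightarrow> f s * emeasure L (transporter act s t) = 0"
    using orbit_sym transporter_eq_empty by simp
qed auto

lemma infsum_transporter_source_unimodular: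
  assumes "unimodular L"
  shows "(\<Sum>\<^sub>\<infinity>s. f s * emeasure L (transporter act s t))
     = emeasure L (transporter act t t) * (\<Sum>\<^sub>\<infinity>s\<in>orbit act t. f s)"
proof -
  have "(\<Sum>\<^sub>\<infinity>s. f s * emeasure L (transporter act s t))
      = (\<Sum>\<^sub>\<infinity>s\<in>orbit act t. emeasure L (transporter act t t) * f s)"
  proof (rule infsum_cong_neutral)
    fix s
    show "s \<in> UNIV \<inter> orbit act t \<Longrightarrow>
        f s * emeasure L (transporter act s t) = emeasure L (transporter act t t) * f s"
      using emeasure_transporter_right_coset[OF assms] by (simp add: mult.commute)
    show "s \<in> UNIV - orbit act t \<Longrightarrow> f s * emeasure L (transporter act s t) = 0"
      using orbit_sym transporter_eq_empty by simp
  qed auto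
  then show ?thesis
    by (simp add: infsum_cmult_right_ennreal)
qed

lemma mass_transport_orbits:
  assumes "invariant_kernel act m"
  shows "(\<Sum>\<^sub>\<infinity>s\<in>orbit act b'. m b s * emeasure L (transporter act s s))
       = (\<Sum>\<^sub>\<infinity>u\<in>orbit act b. emeasure L (transporter act b b) * m u b')"
  using mass_transport[OF assms]
  by (simp add: infsum_transporter_source infsum_transporter_target)

lemma mass_transport_orbits_unimodular:
  assumes "invariant_kernel act m" and "unimodular L"
  shows "emeasure L (transporter act b' b') * (\<Sum>\<^sub>\<infinity>s\<in>orbit act b'. m b s)
       = emeasure L (transporter act b b) * (\<Sum>\<^sub>\<infinity>u\<in>orbit act b. m u b')"
  using mass_transport[OF assms(1)]
  by (simp add: infsum_transporter_source_unimodular[OF assms(2)] infsum_transporter_target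
      infsum_cmult_right_ennreal)

lemma infsum_orbit_representatives:
  fixes f :: "'s \<Rightarrow> ennreal"
  assumes "orbit_representatives act R"
  shows "(\<Sum>\<^sub>\<infinity>b\<in>R. \<Sum>\<^sub>\<infinity>s\<in>orbit act b. f s) = (\<Sum>\<^sub>\<infinity>s. f s)"
proof -
  have "(\<Sum>\<^sub>\<infinity>b\<in>R. \<Sum>\<^sub>\<infinity>s\<in>orbit act b. f s)
      = (\<Sum>\<^sub>\<infinity>b\<in>R. \<Sum>\<^sub>\<infinity>s. if s \<in> orbit act b then f s else 0)"
    by (intro infsum_cong infsum_cong_neutral) auto
  also have "\<dots> = (\<Sum>\<^sub>\<infinity>s. \<Sum>\<^sub>\<infinity>b\<in>R. if s \<in> orbit act b then f s else 0)"
    by (rule infsum_swap_ennreal) auto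
  also have "\<dots> = (\<Sum>\<^sub>\<infinity>s. f s)"
  proof (rule infsum_cong)
    fix s
    obtain b where b: "b \<in> R" "s \<in> orbit act b"
      and unique: "\<And>c. c \<in> R \<Longrightarrow> s \<in> orbit act c \<Longrightarrow> c = b"
      using assms unfolding orbit_representatives_def orbit_sym[of s] by blast
    have "(\<Sum>\<^sub>\<infinity>c\<in>R. if s \<in> orbit act c then f s else 0)
        = (\<Sum>\<^sub>\<infinity>c\<in>{b}. if s \<in> orbit act c then f s else 0)"
    proof (rule infsum_cong_neutral)
      fix c assume "c \<in> R - {b}"
      then have "s \<notin> orbit act c"
        using unique by blast
      then show "(if s \<in> orbit act c then f s else 0) = 0"
        by simp
    qed (use b in auto)
    then show "(\<Sum>\<^sub>\<infinity>c\<in>R. if s \<in> orbit act c then f s else 0) = f s"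
      using b by simp
  qed
  finally show ?thesis .
qed

lemma emeasure_stabilizer_pos: "0 < emeasure L (transporter act s s)"
proof (rule ccontr)
  assume "\<not> ?thesis"
  then have "transporter act s t \<in> null_sets L" for t
    using sets_transporter
    by (cases "t \<in> orbit act s") (auto simp: transporter_eq_empty emeasure_transporter_left_coset)
  then have "(\<Union>t. transporter act s t) \<in> null_sets L"
    by blast
  moreover have "(\<Union>t. transporter act s t) = UNIV"
    by (auto simp: transporter_def)
  ultimately have "emeasure L UNIV = 0"
    by (metis null_setsD1)
  moreover have "0 < emeasure L UNIV"
    using left_haar unfolding left_haar_measure_def by blast
  ultimately show False
    by simp
qed

lemma emeasure_stabilizer_finite:
  assumes "proper_action L act"
  shows "emeasure L (transporter act s s) < \<infinity>"
proof -
  obtain B :: "nat \<Rightarrow> 's set"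
    where B: "(\<Union>n. B n) = UNIV" "\<And>n. emeasure (orbit_measure L act s) (B n) < \<infinity>"
    using assms by (auto simp: proper_action_def)
  then obtain n where "s \<in> B n"
    by blast
  then have "transporter act s s \<subseteq> (\<lambda>g. act g s) -` B n \<inter> space L"
    by (auto simp: transporter_def)
  moreover have "(\<lambda>g. act g s) -` B n \<inter> space L \<in> sets L"
    using measurable_act by (rule measurable_sets) simp
  ultimately have "emeasure L (transporter act s s) \<le> emeasure (orbit_measure L act s) (B n)"
    unfolding orbit_measure_def using measurable_act by (simp add: emeasure_distr emeasure_mono)
  then show ?thesis
    using B(2)[of n] by (rule le_less_trans)
qed

lemma double_orbit_sum_mass_transport:
  assumes "invariant_kernel act m"
  shows "(\<Sum>\<^sub>\<infinity>b\<in>R. \<Sum>\<^sub>\<infinity>b'\<in>R. \<Sum>\<^sub>\<infinity>s\<in>orbit act b'. m b s * emeasure L (transporter act s s))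
       = (\<Sum>\<^sub>\<infinity>b\<in>R. \<Sum>\<^sub>\<infinity>b'\<in>R. \<Sum>\<^sub>\<infinity>s\<in>orbit act b'. emeasure L (transporter act b' b') * m s b)"
proof -
  have "(\<Sum>\<^sub>\<infinity>b\<in>R. \<Sum>\<^sub>\<infinity>b'\<in>R. \<Sum>\<^sub>\<infinity>s\<in>orbit act b'. m b s * emeasure L (transporter act s s))
      = (\<Sum>\<^sub>\<infinity>b\<in>R. \<Sum>\<^sub>\<infinity>b'\<in>R. \<Sum>\<^sub>\<infinity>u\<in>orbit act b. emeasure L (transporter act b b) * m u b')"
    by (simp only: mass_transport_orbits[OF assms])
  also have "\<dots> = (\<Sum>\<^sub>\<infinity>b'\<in>R. \<Sum>\<^sub>\<infinity>b\<in>R. \<Sum>\<^sub>\<infinity>u\<in>orbit act b. emeasure L (transporter act b b) * m u b')"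
    by (rule infsum_swap_ennreal) auto
  finally show ?thesis .
qed

lemma weighted_sum_mass_transport_unimodular:
  assumes "invariant_kernel act m" "unimodular L" "proper_action L act"
    and "orbit_representatives act R"
  shows "(\<Sum>\<^sub>\<infinity>b\<in>R. (1 / emeasure L (transporter act b b)) * (\<Sum>\<^sub>\<infinity>s. m b s))
       = (\<Sum>\<^sub>\<infinity>b\<in>R. (1 / emeasure L (transporter act b b)) * (\<Sum>\<^sub>\<infinity>s. m s b))"
proof -
  let ?w = "\<lambda>b. 1 / emeasure L (transporter act b b)"
  have swap_weight: "?w b * (\<Sum>\<^sub>\<infinity>s\<in>orbit act b'. m b s) = ?w b' * (\<Sum>\<^sub>\<infinity>u\<in>orbit act b. m u b')"
    for b b'
    by (intro divide_mult_eq_divide_mult_ennreal emeasure_stabilizer_pos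
        emeasure_stabilizer_finite[OF assms(3)] mass_transport_orbits_unimodular[OF assms(1,2)])
  have "(\<Sum>\<^sub>\<infinity>b\<in>R. ?w b * (\<Sum>\<^sub>\<infinity>s. m b s))
      = (\<Sum>\<^sub>\<infinity>b\<in>R. \<Sum>\<^sub>\<infinity>b'\<in>R. ?w b * (\<Sum>\<^sub>\<infinity>s\<in>orbit act b'. m b s))"
    by (simp add: infsum_orbit_representatives[OF assms(4)] infsum_cmult_right_ennreal)
  also have "\<dots> = (\<Sum>\<^sub>\<infinity>b'\<in>R. \<Sum>\<^sub>\<infinity>b\<in>R. ?w b' * (\<Sum>\<^sub>\<infinity>u\<in>orbit act b. m u b'))"
    unfolding swap_weight by (rule infsum_swap_ennreal) auto
  also have "\<dots> = (\<Sum>\<^sub>\<infinity>b'\<in>R. ?w b' * (\<Sum>\<^sub>\<infinity>u. m u b'))"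
    by (simp add: infsum_orbit_representatives[OF assms(4)] infsum_cmult_right_ennreal)
  finally show ?thesis .
qed

end

theorem corollary6p6:
  fixes L :: "'g::{topological_group_add, t2_space, second_countable_topology} measure"
    and act :: "'g \<Rightarrow> 's::countable \<Rightarrow> 's"
    and Reps :: "'s set"
    and m :: "'s \<Rightarrow> 's \<Rightarrow> ennreal"
  assumes "lcsc_group TYPE('g)"
    and "left_haar_measure L"
    and "measurable_action act"
    and "proper_action L act"
    and "orbit_representatives act Reps"
    and "invariant_kernel act m"
  shows "((\<Sum>\<^sub>\<infinity>b\<in>Reps. \<Sum>\<^sub>\<infinity>b'\<in>Reps. \<Sum>\<^sub>\<infinity>s\<in>orbit act b'.
            m b s * emeasure L (transporter act s s))
       = (\<Sum>\<^sub>\<infinity>b\<in>Reps. \<Sum>\<^sub>\<infinity>b'\<in>Reps. \<Sum>\<^sub>\<infinity>s\<in>orbit act b'.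
            emeasure L (transporter act b' b') * m s b)) \<and>
         (unimodular L \<longrightarrow>
         (\<Sum>\<^sub>\<infinity>b\<in>Reps. (1 / emeasure L (transporter act b b)) * (\<Sum>\<^sub>\<infinity>s\<in>UNIV. m b s))
       = (\<Sum>\<^sub>\<infinity>b\<in>Reps. (1 / emeasure L (transporter act b b)) * (\<Sum>\<^sub>\<infinity>s\<in>UNIV. m s b)))"
proof -
  \<comment> \<open>Local compactness only matters for the existence of \<open>L\<close>, which is assumed.\<close>
  interpret haar_action L act
    using assms(2,3) by unfold_locales
  show ?thesis
    using double_orbit_sum_mass_transport[OF assms(6)]
      weighted_sum_mass_transport_unimodular[OF assms(6) _ assms(4,5)]
    by blast
qed

end
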